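(* Let $p_{0,0},p_{1,0}\in[0,1]$ with $p_{0,0}<p_{1,0}$ (negatively correlated arm) and $0\le\rho_0<\rho_1\le1$. Then the belief updates $\gamma_0$ and $\gamma_1$ defined in the context are decreasing in $\pi\in[0,1]$; moreover $\gamma_1$ is concave and $\gamma_0$ is convex, and $p_{0,0}\le\gamma_0(\pi)\le\gamma_1(\pi)\le p_{1,0}$ for all $\pi\in[0,1]$.
   Context: For $\pi\in[0,1]$ define $\gamma_1(\pi)=\frac{(1-\pi)\rho_1p_{1,0}+\pi\rho_0p_{0,0}}{\rho_1(1-\pi)+\rho_0\pi}$ and $\gamma_0(\pi)=\frac{(1-\pi)(1-\rho_1)p_{1,0}+\pi(1-\rho_0)p_{0,0}}{(1-\rho_1)(1-\pi)+(1-\rho_0)\pi}$. (These are the posterior probabilities of hidden state $0$ of a two-state Markov chain with transition probability $p_{i,0}$ from state $i$ to $0$, after an ACK, respectively a NACK, where $\rho_i$ is the ACK probability in state $i$.) *)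

theory Defs
  imports "HOL-Analysis.Analysis"
begin

definition gamma1 :: "real \<Rightarrow> real \<Rightarrow> real \<Rightarrow> real \<Rightarrow> real \<Rightarrow> real" where
  "gamma1 p00 p10 \<rho>0 \<rho>1 \<pi> =
     ((1 - \<pi>) * \<rho>1 * p10 + \<pi> * \<rho>0 * p00) / (\<rho>1 * (1 - \<pi>) + \<rho>0 * \<pi>)"

definition gamma0 :: "real \<Rightarrow> real \<Rightarrow> real \<Rightarrow> real \<Rightarrow> real \<Rightarrow> real" where
  "gamma0 p00 p10 \<rho>0 \<rho>1 \<pi> =
     ((1 - \<pi>) * (1 - \<rho>1) * p10 + \<pi> * (1 - \<rho>0) * p00) /
     ((1 - \<rho>1) * (1 - \<pi>) + (1 - \<rho>0) * \<pi>)"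

definition dom1 :: "real \<Rightarrow> real \<Rightarrow> real set" where
  "dom1 \<rho>0 \<rho>1 = {\<pi>. 0 \<le> \<pi> \<and> \<pi> \<le> 1 \<and> \<rho>1 * (1 - \<pi>) + \<rho>0 * \<pi> \<noteq> 0}"

definition dom0 :: "real \<Rightarrow> real \<Rightarrow> real set" where
  "dom0 \<rho>0 \<rho>1 = {\<pi>. 0 \<le> \<pi> \<and> \<pi> \<le> 1 \<and> (1 - \<rho>1) * (1 - \<pi>) + (1 - \<rho>0) * \<pi> \<noteq> 0}"

end

theory Submission
  imports Defs
begin

text \<open>Both updates have the form \<open>\<pi> \<mapsto> p\<^sub>0\<^sub>0 + (p\<^sub>1\<^sub>0 - p\<^sub>0\<^sub>0) w(\<pi>)\<close>, where
\<open>w(\<pi>) = a(1 - \<pi>) / (a(1 - \<pi>) + b\<pi>)\<close> is the posterior probability of state 1 after an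
observation of likelihood \<open>a\<close> in state 1 and \<open>b\<close> in state 0 (\<open>a = \<rho>\<^sub>1, b = \<rho>\<^sub>0\<close> for an ACK,
\<open>a = 1 - \<rho>\<^sub>1, b = 1 - \<rho>\<^sub>0\<close> for a NACK). The weight \<open>w\<close> is decreasing, lies in \<open>[0,1]\<close> and
grows with the likelihood ratio \<open>a/b\<close>; moreover it is a Moebius function \<open>c + k / (a + (b - a)\<pi>)\<close> with
\<open>k = ab/(b - a)\<close>, hence convex when \<open>a \<le> b\<close> and concave when \<open>b \<le> a\<close>.\<close>

definition belief_update :: "real \<Rightarrow> real \<Rightarrow> real \<Rightarrow> real \<Rightarrow> real \<Rightarrow> real" where
  "belief_update a b x y \<pi> = ((1 - \<pi>) * a * x + \<pi> * b * y) / (a * (1 - \<pi>) + b * \<pi>)"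

definition posterior1 :: "real \<Rightarrow> real \<Rightarrow> real \<Rightarrow> real" where
  "posterior1 a b \<pi> = a * (1 - \<pi>) / (a * (1 - \<pi>) + b * \<pi>)"

definition belief_dom :: "real \<Rightarrow> real \<Rightarrow> real set" where
  "belief_dom a b = {\<pi>. 0 \<le> \<pi> \<and> \<pi> \<le> 1 \<and> a * (1 - \<pi>) + b * \<pi> \<noteq> 0}"

lemma convex_on_eq_on:
  assumes "convex_on S f" "\<And>x. x \<in> S \<Longrightarrow> g x = f x"
  shows "convex_on S g"
  using assms by (auto simp: convex_on_def convex_def)

lemma convex_on_compose_affine:
  fixes f :: "real \<Rightarrow> real"
  assumes f: "convex_on T f" and S: "convex S" and maps: "\<And>x. x \<in> S \<Longrightarrow> m * x + q \<in> T"
  shows "convex_on S (\<lambda>x. f (m * x + q))"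
  unfolding convex_on_def
proof (intro conjI S ballI allI impI)
  fix x y u v :: real
  assume "x \<in> S" "y \<in> S" "0 \<le> u" "0 \<le> v" "u + v = 1"
  then have "f (u *\<^sub>R (m * x + q) + v *\<^sub>R (m * y + q)) \<le> u * f (m * x + q) + v * f (m * y + q)"
    using f maps unfolding convex_on_def by blast
  moreover have "u * (m * x + q) + v * (m * y + q) = m * (u * x + v * y) + (u + v) * q"
    by (simp add: algebra_simps)
  ultimately show "f (m * (u *\<^sub>R x + v *\<^sub>R y) + q) \<le> u * f (m * x + q) + v * f (m * y + q)"
    using \<open>u + v = 1\<close> by simp
qed

lemma convex_on_inverse_affine:
  assumes "convex S" "\<And>x. x \<in> S \<Longrightarrow> 0 < m * x + q"
  shows "convex_on S (\<lambda>x. inverse (m * x + q))"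
  using assms by (intro convex_on_compose_affine[OF convex_on_inverse[of "{0<..}"]]) auto

lemma belief_denom_pos:
  assumes "0 \<le> a" "0 \<le> b" "\<pi> \<in> belief_dom a b"
  shows "0 < a * (1 - \<pi>) + b * \<pi>"
  using assms by (auto simp: belief_dom_def less_le)

lemma convex_belief_dom:
  assumes "0 \<le> a" "0 \<le> b"
  shows "convex (belief_dom a b)"
proof -
  have "belief_dom a b = {0..1} \<inter> {\<pi>. (b - a) * \<pi> > - a}"
  proof (intro set_eqI iffI)
    fix \<pi> assume "\<pi> \<in> belief_dom a b"
    then show "\<pi> \<in> {0..1} \<inter> {\<pi>. (b - a) * \<pi> > - a}"
      using belief_denom_pos[OF assms] by (auto simp: belief_dom_def algebra_simps)
  qed (auto simp: belief_dom_def algebra_simps)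
  then show ?thesis
    using convex_halfspace_gt[where a="b - a" and b="- a", unfolded inner_real_def]
    by (simp add: convex_Int)
qed

lemma belief_update_eq_posterior1:
  assumes "a * (1 - \<pi>) + b * \<pi> \<noteq> 0"
  shows "belief_update a b x y \<pi> = y + (x - y) * posterior1 a b \<pi>"
  using assms by (simp add: belief_update_def posterior1_def field_simps)

lemma posterior1_bounds:
  assumes "0 \<le> a" "0 \<le> b" "\<pi> \<in> belief_dom a b"
  shows "0 \<le> posterior1 a b \<pi>" "posterior1 a b \<pi> \<le> 1"
  using assms belief_denom_pos[OF assms] by (auto simp: belief_dom_def posterior1_def)

lemma posterior1_mono_likelihood:
  assumes "a * b' \<le> a' * b" "0 \<le> \<pi>" "\<pi> \<le> 1"
    and "0 < a * (1 - \<pi>) + b * \<pi>" "0 < a' * (1 - \<pi>) + b' * \<pi>"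
  shows "posterior1 a b \<pi> \<le> posterior1 a' b' \<pi>"
proof -
  have "(1 - \<pi>) * \<pi> * (a * b') \<le> (1 - \<pi>) * \<pi> * (a' * b)"
    using assms by (intro mult_left_mono) auto
  then show ?thesis
    using assms by (simp add: posterior1_def divide_simps) (simp add: algebra_simps)
qed

lemma posterior1_antimono:
  assumes "0 \<le> a" "0 \<le> b"
  shows "antimono_on (belief_dom a b) (posterior1 a b)"
proof (rule monotone_onI)
  fix \<pi> \<sigma> assume in_dom: "\<pi> \<in> belief_dom a b" "\<sigma> \<in> belief_dom a b" and "\<pi> \<le> \<sigma>"
  then have "a * b * \<pi> \<le> a * b * \<sigma>"
    using assms by (intro mult_left_mono) auto
  then show "posterior1 a b \<sigma> \<le> posterior1 a b \<pi>"
    using belief_denom_pos[OF assms in_dom(1)] belief_denom_pos[OF assms in_dom(2)]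
    by (simp add: posterior1_def divide_simps) (simp add: algebra_simps)
qed

lemma posterior1_moebius:
  assumes "a \<noteq> b" "a * (1 - \<pi>) + b * \<pi> \<noteq> 0"
  shows "posterior1 a b \<pi> = a / (a - b) + a * b / (b - a) * inverse ((b - a) * \<pi> + a)"
proof -
  define D where "D = (b - a) * \<pi> + a"
  define e where "e = b - a"
  have "D \<noteq> 0" "e \<noteq> 0"
    using assms by (simp_all add: D_def e_def algebra_simps)
  have "a / (a - b) + a * b / (b - a) * inverse D = a / (- e) + a * b / e * inverse D"
    by (simp add: e_def)
  also have "\<dots> = a * (b - D) / (e * D)"
    using \<open>D \<noteq> 0\<close> \<open>e \<noteq> 0\<close> by (simp add: field_simps)
  also have "b - D = e * (1 - \<pi>)"
    by (simp add: D_def e_def algebra_simps)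
  also have "a * (e * (1 - \<pi>)) / (e * D) = a * (1 - \<pi>) / D"
    using \<open>e \<noteq> 0\<close> by simp
  finally have "a / (a - b) + a * b / (b - a) * inverse D = a * (1 - \<pi>) / D" .
  moreover have denom: "a * (1 - \<pi>) + b * \<pi> = D"
    by (simp add: D_def algebra_simps)
  ultimately show ?thesis
    unfolding posterior1_def denom D_def[symmetric] by simp
qed

lemma posterior1_convex:
  assumes "0 \<le> a" "a \<le> b"
  shows "convex_on (belief_dom a b) (posterior1 a b)"
proof (cases "a = b")
  case True
  have "convex_on (belief_dom a b) (\<lambda>\<pi>. 1 - \<pi>)"
    using assms by (intro convex_on_diff) (simp_all add: convex_on_const concave_on_ident convex_belief_dom)
  then show ?thesis
    by (rule convex_on_eq_on) (simp add: True posterior1_def belief_dom_def flip: distrib_left)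
next
  case False
  have "convex_on (belief_dom a b) (\<lambda>\<pi>. a / (a - b) + a * b / (b - a) * inverse ((b - a) * \<pi> + a))"
  proof (intro convex_on_add convex_on_cmul convex_on_inverse_affine)
    show "convex_on (belief_dom a b) (\<lambda>\<pi>. a / (a - b))" "convex (belief_dom a b)"
      using assms by (simp_all add: convex_on_const convex_belief_dom)
    show "0 \<le> a * b / (b - a)"
      using assms by simp
    show "0 < (b - a) * \<pi> + a" if "\<pi> \<in> belief_dom a b" for \<pi>
      using belief_denom_pos[of a b \<pi>] assms that by (simp add: algebra_simps)
  qed
  then show ?thesis
    by (rule convex_on_eq_on) (simp add: False posterior1_moebius belief_dom_def)
qed

lemma posterior1_concave:
  assumes "0 \<le> b" "b \<le> a"
  shows "concave_on (belief_dom a b) (posterior1 a b)"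
  unfolding concave_on_def
proof -
  \<comment> \<open>Reflection: \<open>posterior1 a b \<pi> = 1 - posterior1 b a (1 - \<pi>)\<close>.\<close>
  have "convex_on (belief_dom a b) (\<lambda>\<pi>. posterior1 b a ((- 1) * \<pi> + 1) + (- 1))"
  proof (intro convex_on_add convex_on_compose_affine[OF posterior1_convex])
    show "convex (belief_dom a b)" "convex_on (belief_dom a b) (\<lambda>\<pi>. - 1)"
      using assms by (simp_all add: convex_on_const convex_belief_dom)
    show "(- 1) * \<pi> + 1 \<in> belief_dom b a" if "\<pi> \<in> belief_dom a b" for \<pi>
      using that by (auto simp: belief_dom_def algebra_simps)
  qed (use assms in auto)
  then show "convex_on (belief_dom a b) (\<lambda>\<pi>. - posterior1 a b \<pi>)"
    by (rule convex_on_eq_on) (auto simp: posterior1_def belief_dom_def field_simps)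
qed

lemma belief_update_antimono:
  assumes "0 \<le> a" "0 \<le> b" "y \<le> x"
  shows "antimono_on (belief_dom a b) (belief_update a b x y)"
proof (rule monotone_onI)
  fix \<pi> \<sigma> assume in_dom: "\<pi> \<in> belief_dom a b" "\<sigma> \<in> belief_dom a b" and "\<pi> \<le> \<sigma>"
  then have "posterior1 a b \<sigma> \<le> posterior1 a b \<pi>"
    using posterior1_antimono[OF assms(1,2)] by (simp add: monotone_on_def)
  then have "(x - y) * posterior1 a b \<sigma> \<le> (x - y) * posterior1 a b \<pi>"
    using assms(3) by (simp add: mult_left_mono)
  with in_dom show "belief_update a b x y \<sigma> \<le> belief_update a b x y \<pi>"
    by (simp add: belief_update_eq_posterior1 belief_dom_def)
qed

lemma belief_update_convex:
  assumes "0 \<le> a" "a \<le> b" "y \<le> x"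
  shows "convex_on (belief_dom a b) (belief_update a b x y)"
proof -
  have "convex_on (belief_dom a b) (\<lambda>\<pi>. y + (x - y) * posterior1 a b \<pi>)"
    using assms by (intro convex_on_add convex_on_cmul posterior1_convex)
      (simp_all add: convex_on_const convex_belief_dom)
  then show ?thesis
    by (rule convex_on_eq_on) (simp add: belief_update_eq_posterior1 belief_dom_def)
qed

lemma belief_update_concave:
  assumes "0 \<le> b" "b \<le> a" "y \<le> x"
  shows "concave_on (belief_dom a b) (belief_update a b x y)"
proof -
  have "concave_on (belief_dom a b) (\<lambda>\<pi>. y + (x - y) * posterior1 a b \<pi>)"
    using assms by (intro concave_on_add concave_on_cmul posterior1_concave)
      (simp_all add: concave_on_const convex_belief_dom)
  then show ?thesis
    unfolding concave_on_def
    by (rule convex_on_eq_on) (simp add: belief_update_eq_posterior1 belief_dom_def)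
qed

lemma belief_update_bounds:
  assumes "0 \<le> a" "0 \<le> b" "y \<le> x" "\<pi> \<in> belief_dom a b"
  shows "y \<le> belief_update a b x y \<pi>" "belief_update a b x y \<pi> \<le> x"
proof -
  have eq: "belief_update a b x y \<pi> = y + (x - y) * posterior1 a b \<pi>"
    using assms(4) by (simp add: belief_update_eq_posterior1 belief_dom_def)
  note w = posterior1_bounds[OF assms(1,2,4)]
  show "y \<le> belief_update a b x y \<pi>"
    unfolding eq using w(1) assms(3) by simp
  show "belief_update a b x y \<pi> \<le> x"
    unfolding eq using mult_left_mono[OF w(2), of "x - y"] assms(3) by simp
qed

lemma belief_update_mono_likelihood:
  assumes "0 \<le> a" "0 \<le> b" "0 \<le> a'" "0 \<le> b'" "a * b' \<le> a' * b" "y \<le> x"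
    and "\<pi> \<in> belief_dom a b" "\<pi> \<in> belief_dom a' b'"
  shows "belief_update a b x y \<pi> \<le> belief_update a' b' x y \<pi>"
proof -
  have "posterior1 a b \<pi> \<le> posterior1 a' b' \<pi>"
    using assms belief_denom_pos[OF assms(1,2,7)] belief_denom_pos[OF assms(3,4,8)]
    by (intro posterior1_mono_likelihood) (auto simp: belief_dom_def)
  then have "(x - y) * posterior1 a b \<pi> \<le> (x - y) * posterior1 a' b' \<pi>"
    using assms(6) by (simp add: mult_left_mono)
  with assms(7,8) show ?thesis
    by (simp add: belief_update_eq_posterior1 belief_dom_def)
qed

lemma gamma1_eq_belief_update: "gamma1 p00 p10 \<rho>0 \<rho>1 = belief_update \<rho>1 \<rho>0 p10 p00"
  by (simp add: fun_eq_iff gamma1_def belief_update_def)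

lemma gamma0_eq_belief_update: "gamma0 p00 p10 \<rho>0 \<rho>1 = belief_update (1 - \<rho>1) (1 - \<rho>0) p10 p00"
  by (simp add: fun_eq_iff gamma0_def belief_update_def)

lemma dom1_eq_belief_dom: "dom1 \<rho>0 \<rho>1 = belief_dom \<rho>1 \<rho>0"
  by (simp add: dom1_def belief_dom_def)

lemma dom0_eq_belief_dom: "dom0 \<rho>0 \<rho>1 = belief_dom (1 - \<rho>1) (1 - \<rho>0)"
  by (simp add: dom0_def belief_dom_def)

theorem lemma5:
  fixes p00 p10 \<rho>0 \<rho>1 :: real
  assumes "0 \<le> p00" "p00 \<le> 1" "0 \<le> p10" "p10 \<le> 1" "p00 < p10"
    and "0 \<le> \<rho>0" "\<rho>0 < \<rho>1" "\<rho>1 \<le> 1"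
  shows "antimono_on (dom1 \<rho>0 \<rho>1) (gamma1 p00 p10 \<rho>0 \<rho>1) \<and>
     antimono_on (dom0 \<rho>0 \<rho>1) (gamma0 p00 p10 \<rho>0 \<rho>1) \<and>
     concave_on (dom1 \<rho>0 \<rho>1) (gamma1 p00 p10 \<rho>0 \<rho>1) \<and>
     convex_on (dom0 \<rho>0 \<rho>1) (gamma0 p00 p10 \<rho>0 \<rho>1) \<and>
     (\<forall>\<pi> \<in> dom0 \<rho>0 \<rho>1 \<inter> dom1 \<rho>0 \<rho>1.
           p00 \<le> gamma0 p00 p10 \<rho>0 \<rho>1 \<pi> \<and>
           gamma0 p00 p10 \<rho>0 \<rho>1 \<pi> \<le> gamma1 p00 p10 \<rho>0 \<rho>1 \<pi> \<and>
           gamma1 p00 p10 \<rho>0 \<rho>1 \<pi> \<le> p10)"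
proof -
  have \<rho>: "0 \<le> \<rho>1" "0 \<le> 1 - \<rho>1" "0 \<le> 1 - \<rho>0" "\<rho>0 \<le> \<rho>1" "1 - \<rho>1 \<le> 1 - \<rho>0"
    using assms by simp_all
  have ratio: "(1 - \<rho>1) * \<rho>0 \<le> \<rho>1 * (1 - \<rho>0)"
    using assms by (simp add: algebra_simps)
  have "p00 \<le> p10"
    using assms by simp
  show ?thesis
    unfolding gamma1_eq_belief_update gamma0_eq_belief_update dom1_eq_belief_dom dom0_eq_belief_dom
  proof (intro conjI ballI)
    show "antimono_on (belief_dom \<rho>1 \<rho>0) (belief_update \<rho>1 \<rho>0 p10 p00)"
      by (rule belief_update_antimono[OF \<rho>(1) assms(6) \<open>p00 \<le> p10\<close>])
    show "antimono_on (belief_dom (1 - \<rho>1) (1 - \<rho>0)) (belief_update (1 - \<rho>1) (1 - \<rho>0) p10 p00)"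
      by (rule belief_update_antimono[OF \<rho>(2,3) \<open>p00 \<le> p10\<close>])
    show "concave_on (belief_dom \<rho>1 \<rho>0) (belief_update \<rho>1 \<rho>0 p10 p00)"
      by (rule belief_update_concave[OF assms(6) \<rho>(4) \<open>p00 \<le> p10\<close>])
    show "convex_on (belief_dom (1 - \<rho>1) (1 - \<rho>0)) (belief_update (1 - \<rho>1) (1 - \<rho>0) p10 p00)"
      by (rule belief_update_convex[OF \<rho>(2,5) \<open>p00 \<le> p10\<close>])
    fix \<pi> assume "\<pi> \<in> belief_dom (1 - \<rho>1) (1 - \<rho>0) \<inter> belief_dom \<rho>1 \<rho>0"
    then have nack: "\<pi> \<in> belief_dom (1 - \<rho>1) (1 - \<rho>0)" and ack: "\<pi> \<in> belief_dom \<rho>1 \<rho>0"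
      by simp_all
    show "p00 \<le> belief_update (1 - \<rho>1) (1 - \<rho>0) p10 p00 \<pi>"
      by (rule belief_update_bounds(1)[OF \<rho>(2,3) \<open>p00 \<le> p10\<close> nack])
    show "belief_update (1 - \<rho>1) (1 - \<rho>0) p10 p00 \<pi> \<le> belief_update \<rho>1 \<rho>0 p10 p00 \<pi>"
      by (rule belief_update_mono_likelihood[OF \<rho>(2,3,1) assms(6) ratio \<open>p00 \<le> p10\<close> nack ack])
    show "belief_update \<rho>1 \<rho>0 p10 p00 \<pi> \<le> p10"
      by (rule belief_update_bounds(2)[OF \<rho>(1) assms(6) \<open>p00 \<le> p10\<close> ack])
  qed
qed

end
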